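(* For integers $1\le k\le n$, let $h_{k|n}(p)=\sum_{i=k}^{n}\binom{n}{i}p^i(1-p)^{n-i}$, $p\in[0,1]$, be the reliability function of a $k$-out-of-$n$ system with i.i.d. components each of reliability $p$, and let $R_{k|n}(p)=(1-p)\,h_{k|n}'(p)/(1-h_{k|n}(p))$ for $p\in(0,1)$. Then: (ii) for integers $1\le k\le n$ and $1\le l\le m$ with $l\le k$ and $n-k\le m-l$, the ratio $R_{k|n}(p)/R_{l|m}(p)$ is increasing in $p\in(0,1)$; (iii) for $1\le k\le n$, the function $p\,R_{k|n}'(p)/R_{k|n}(p)$ is decreasing in $p\in(0,1)$.
   Context: "Increasing" means non-decreasing and "decreasing" means non-increasing. A $k$-out-of-$n$ system functions as long as at least $k$ of its $n$ components function. (Part (i) of this lemma in the paper, that $R_{k|n}$ is increasing, is a cited result and is not included.) *)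

theory Defs
  imports "HOL-Analysis.Analysis"
begin

definition hkn :: "nat \<Rightarrow> nat \<Rightarrow> real \<Rightarrow> real" where
  "hkn k n p = (\<Sum>i=k..n. real (n choose i) * p ^ i * (1 - p) ^ (n - i))"

definition Rkn :: "nat \<Rightarrow> nat \<Rightarrow> real \<Rightarrow> real" where
  "Rkn k n p = (1 - p) * deriv (hkn k n) p / (1 - hkn k n p)"

end

theory Submission
  imports Defs
begin

(*
  Conditioning on when the (n - k + 1)-st component failure occurs gives
  1 - h_{k|n}(p) = (1 - p)^(n-k+1) G_{n-k,k}(p), where G_{N,k}(p) = sum_{j<k} C(N + j, j) p^j,
  together with h'_{k|n}(p) = k C(n, k) p^(k-1) (1 - p)^(n-k). Hence
  R_{k|n}(p) = k C(n, k) p^(k-1) / G_{n-k,k}(p), and both claims reduce to one fact: if b_i > 0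
  and a_i / b_i increases, then (sum a_i p^i) / (sum b_i p^i) increases for p >= 0, because
  symmetrising its cross difference yields terms (a_i b_j - a_j b_i)(p^i q^j - q^i p^j) <= 0.
  For (ii) the numerator is p^(k-l) G_{m-l,l}(p), whose coefficient ratios against G_{n-k,k}
  increase because n - k <= m - l; for (iii) p R'/R = k - 1 - p G'/G, and p G'(p) has
  coefficients i C(N + i, i).
*)

lemma power_sums_cross_le:
  fixes a b :: "nat \<Rightarrow> 'a::linordered_field"
  assumes ratio_mono: "mono (\<lambda>i. a i / b i)" and b_pos: "\<And>i. 0 < b i"
    and "0 \<le> p" "p \<le> q"
  shows "(\<Sum>i<K. a i * p ^ i) * (\<Sum>i<K. b i * q ^ i) \<le> (\<Sum>i<K. a i * q ^ i) * (\<Sum>i<K. b i * p ^ i)"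
proof -
  have coeffs: "a j * b i \<le> a i * b j" if "j \<le> i" for i j
    using monoD[OF ratio_mono that] b_pos[of i] b_pos[of j] by (simp add: divide_simps mult.commute)
  have powers: "p ^ i * q ^ j \<le> q ^ i * p ^ j" if "j \<le> i" for i j
  proof -
    have "p ^ i * q ^ j = p ^ j * q ^ j * p ^ (i - j)"
      using that by (simp add: power_add[symmetric] mult_ac)
    also have "\<dots> \<le> p ^ j * q ^ j * q ^ (i - j)"
      using assms by (intro mult_left_mono power_mono) auto
    also have "\<dots> = q ^ i * p ^ j"
      using that by (simp add: power_add[symmetric] mult_ac)
    finally show ?thesis .
  qed
  define f where "f i j = a i * b j * (p ^ i * q ^ j - q ^ i * p ^ j)" for i j
  have "(\<Sum>i<K. a i * p ^ i) * (\<Sum>i<K. b i * q ^ i) - (\<Sum>i<K. a i * q ^ i) * (\<Sum>i<K. b i * p ^ i)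
      = (\<Sum>i<K. \<Sum>j<K. f i j)"
    by (simp add: f_def sum_product sum_subtractf[symmetric] algebra_simps)
  also have "\<dots> = (\<Sum>i<K. \<Sum>j<K. f i j + f j i) / 2"
    using sum.swap[of f "{..<K}" "{..<K}"] by (simp add: sum.distrib)
  also have "\<dots> \<le> 0"
  proof -
    have "f i j + f j i \<le> 0" for i j
    proof -
      have "f i j + f j i = (a i * b j - a j * b i) * (p ^ i * q ^ j - q ^ i * p ^ j)"
        by (simp add: f_def algebra_simps)
      also have "\<dots> \<le> 0"
        using coeffs[of i j] coeffs[of j i] powers[of i j] powers[of j i]
        by (cases "j \<le> i") (auto intro: mult_nonneg_nonpos mult_nonpos_nonneg simp: mult.commute)
      finally show ?thesis .
    qed
    then show ?thesis by (simp add: sum_nonpos)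
  qed
  finally show ?thesis by simp
qed

lemma mono_on_power_sums_ratio:
  fixes a b :: "nat \<Rightarrow> 'a::linordered_field"
  assumes "mono (\<lambda>i. a i / b i)" and b_pos: "\<And>i. 0 < b i"
  shows "mono_on {0..} (\<lambda>p. (\<Sum>i<K. a i * p ^ i) / (\<Sum>i<K. b i * p ^ i))"
proof (cases "K = 0")
  case True
  then show ?thesis by (simp add: monotone_on_def)
next
  case False
  have denom_pos: "0 < (\<Sum>i<K. b i * p ^ i)" if "0 \<le> p" for p
    using False b_pos[of 0] mult_nonneg_nonneg[OF less_imp_le[OF b_pos] zero_le_power[OF that]]
    by (intro sum_pos2[of _ 0]) auto
  show ?thesis
  proof (rule monotone_onI)
    fix p q :: 'a assume "p \<in> {0..}" "q \<in> {0..}" "p \<le> q"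
    then show "(\<Sum>i<K. a i * p ^ i) / (\<Sum>i<K. b i * p ^ i) \<le> (\<Sum>i<K. a i * q ^ i) / (\<Sum>i<K. b i * q ^ i)"
      using power_sums_cross_le[OF assms, of p q K] denom_pos[of p] denom_pos[of q]
      by (simp add: divide_simps mult.commute)
  qed
qed

lemma binomial_diag_Suc:
  "real (N + Suc j choose Suc j) = real (N + j choose j) * real (N + Suc j) / real (Suc j)"
  using Suc_times_binomial[of j "N + j"]
  by (simp add: field_simps flip: of_nat_mult add_Suc_right)

lemma shifted_binomial_ratio_mono:
  assumes "N \<le> M"
  shows "mono (\<lambda>i. (if d \<le> i then real (M + (i - d) choose (i - d)) else 0) / real (N + i choose i))"
  (is "mono ?r")
proof (rule mono_iff_le_Suc[THEN iffD2], intro allI)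
  fix i
  show "?r i \<le> ?r (Suc i)"
  proof (cases "d \<le> i")
    case False
    then show ?thesis by auto
  next
    case True
    define s where "s = i - d"
    have "s \<le> i" "Suc i - d = Suc s" using True unfolding s_def by auto
    then have "Suc s * N \<le> Suc i * M"
      using assms by (intro mult_le_mono) auto
    then have "Suc s * (N + Suc i) \<le> Suc i * (M + Suc s)"
      by (simp add: algebra_simps)
    then have "real (Suc s) * real (N + Suc i) \<le> real (Suc i) * real (M + Suc s)"
      by (simp only: of_nat_mult[symmetric] of_nat_le_iff)
    then have growth: "1 \<le> real (Suc i) * real (M + Suc s) / (real (Suc s) * real (N + Suc i))"
      by (simp add: le_divide_eq del: of_nat_Suc)
    have "?r i * 1 \<le> ?r i * (real (Suc i) * real (M + Suc s) / (real (Suc s) * real (N + Suc i)))"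
      by (rule mult_left_mono[OF growth]) simp
    also have "\<dots> = real (M + Suc s choose Suc s) / real (N + Suc i choose Suc i)"
      using True unfolding s_def binomial_diag_Suc[of M] binomial_diag_Suc[of N]
      by (simp add: field_simps del: of_nat_Suc)
    also have "\<dots> = ?r (Suc i)"
      using True \<open>Suc i - d = Suc s\<close> by (simp del: binomial_Suc_Suc)
    finally show ?thesis by simp
  qed
qed

lemma sum_shifted_powers:
  fixes f :: "nat \<Rightarrow> 'a::comm_semiring_1"
  shows "(\<Sum>i<d + l. (if d \<le> i then f (i - d) else 0) * p ^ i) = p ^ d * (\<Sum>j<l. f j * p ^ j)"
  by (induction l) (simp_all add: algebra_simps power_add)

lemma has_real_derivative_monomial_div:
  assumes "(g has_real_derivative g') (at x)" "g x \<noteq> 0" "x \<noteq> 0"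
  shows "((\<lambda>y. c * y ^ m / g y) has_real_derivative c * x ^ m / g x * (real m / x - g' / g x)) (at x)"
proof (rule DERIV_cong)
  show "((\<lambda>y. c * y ^ m / g y) has_real_derivative
      (c * (real m * x ^ (m - 1)) * g x - c * x ^ m * g') / (g x * g x)) (at x)"
    using assms by (intro DERIV_divide DERIV_cmult DERIV_pow) auto
  have "real m * x ^ (m - 1) = real m / x * x ^ m"
    using assms by (cases m) auto
  then show "(c * (real m * x ^ (m - 1)) * g x - c * x ^ m * g') / (g x * g x)
      = c * x ^ m / g x * (real m / x - g' / g x)"
    using assms by (simp add: field_simps)
qed

definition binomial_lower_tail :: "nat \<Rightarrow> nat \<Rightarrow> real \<Rightarrow> real" where
  "binomial_lower_tail k n p = (\<Sum>i<k. real (n choose i) * p ^ i * (1 - p) ^ (n - i))"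

text \<open>\<open>negbin_partial_sum N k\<close> truncates the power series of \<open>(1 - p) ^ -(N + 1)\<close> after \<open>k\<close> terms.\<close>
definition negbin_partial_sum :: "nat \<Rightarrow> nat \<Rightarrow> real \<Rightarrow> real" where
  "negbin_partial_sum N k p = (\<Sum>j<k. real (N + j choose j) * p ^ j)"

lemma one_minus_hkn_eq_lower_tail:
  assumes "k \<le> n"
  shows "1 - hkn k n p = binomial_lower_tail k n p"
proof -
  have "{..n} = {..<k} \<union> {k..n}" using assms by auto
  then have "1 = (\<Sum>i\<in>{..<k} \<union> {k..n}. real (n choose i) * p ^ i * (1 - p) ^ (n - i))"
    using binomial_ring[of p "1 - p" n] by simp
  also have "\<dots> = binomial_lower_tail k n p + hkn k n p"
    unfolding binomial_lower_tail_def hkn_def by (rule sum.union_disjoint) auto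
  finally show ?thesis by simp
qed

lemma binomial_lower_tail_Suc_Suc:
  assumes "K \<le> n"
  shows "binomial_lower_tail (Suc K) (Suc n) p
       = binomial_lower_tail K n p + real (n choose K) * p ^ K * (1 - p) ^ Suc (n - K)"
proof -
  define T where "T K' = binomial_lower_tail K' n p" for K'
  define S where "S = (\<Sum>i<K. real (n choose Suc i) * p ^ Suc i * (1 - p) ^ (n - i))"
  have shift: "(1 - p) ^ (n - i) = (1 - p) * (1 - p) ^ (n - Suc i)" if "i < K" for i
    using that assms by (simp add: Suc_diff_Suc[symmetric])
  have "binomial_lower_tail (Suc K) (Suc n) p = (1 - p) ^ Suc n + S + p * T K"
    unfolding binomial_lower_tail_def lessThan_Suc_eq_insert_0 S_def T_def
    by (simp add: sum.reindex sum.distrib sum_distrib_left distrib_right algebra_simps)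
  also have "(1 - p) ^ Suc n + S = (1 - p) * T (Suc K)"
    unfolding binomial_lower_tail_def lessThan_Suc_eq_insert_0 S_def T_def
    by (simp add: sum.reindex sum_distrib_left shift algebra_simps)
  also have "T (Suc K) = T K + real (n choose K) * p ^ K * (1 - p) ^ (n - K)"
    unfolding T_def binomial_lower_tail_def by simp
  finally show ?thesis
    using assms by (simp add: T_def Suc_diff_le algebra_simps)
qed

lemma binomial_lower_tail_eq_negbin:
  "binomial_lower_tail k (N + k) p = (1 - p) ^ Suc N * negbin_partial_sum N k p"
proof (induction k)
  case 0
  then show ?case by (simp add: binomial_lower_tail_def negbin_partial_sum_def)
next
  case (Suc k)
  have "binomial_lower_tail (Suc k) (N + Suc k) p
      = binomial_lower_tail k (N + k) p + real (N + k choose k) * p ^ k * (1 - p) ^ Suc N"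
    using binomial_lower_tail_Suc_Suc[of k "N + k" p] by simp
  with Suc show ?case by (simp add: negbin_partial_sum_def algebra_simps)
qed

lemma one_minus_hkn_eq:
  assumes "k \<le> n"
  shows "1 - hkn k n p = (1 - p) ^ Suc (n - k) * negbin_partial_sum (n - k) k p"
  using one_minus_hkn_eq_lower_tail[OF assms] binomial_lower_tail_eq_negbin[of k "n - k" p] assms
  by simp

lemma negbin_partial_sum_ge_1:
  assumes "0 < k" "0 \<le> p"
  shows "1 \<le> negbin_partial_sum N k p"
proof -
  obtain k' where k: "k = Suc k'" using assms by (cases k) auto
  have "0 \<le> (\<Sum>j<k'. real (N + Suc j choose Suc j) * p ^ Suc j)"
    using assms by (intro sum_nonneg) auto
  then show ?thesis
    unfolding negbin_partial_sum_def k lessThan_Suc_eq_insert_0 by (simp add: sum.reindex)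
qed

lemma has_real_derivative_negbin_tail:
  "((\<lambda>p. (1 - p) ^ Suc N * negbin_partial_sum N k p) has_real_derivative
     - (real k * real (N + k choose k)) * p ^ (k - 1) * (1 - p) ^ N) (at p)"
proof (induction k)
  case 0
  then show ?case by (simp add: negbin_partial_sum_def)
next
  case (Suc k)
  define c where "c = real (N + k choose k)"
  have binom_step: "real (Suc k) * real (N + Suc k choose Suc k) = real (N + Suc k) * c"
    unfolding c_def using Suc_times_binomial[of k "N + k"] by (metis add_Suc_right of_nat_mult)
  have pow_deriv: "((\<lambda>p. (1 - p) ^ Suc N) has_real_derivative - (real (Suc N) * (1 - p) ^ N)) (at p)"
    using DERIV_power[OF DERIV_diff[OF DERIV_const[of 1] DERIV_ident], where n = "Suc N"] by simp
  have step_term: "((\<lambda>p. c * p ^ k * (1 - p) ^ Suc N) has_real_derivative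
      c * (real k * p ^ (k - 1) * (1 - p) ^ Suc N - real (Suc N) * p ^ k * (1 - p) ^ N)) (at p)"
    using DERIV_cmult[OF DERIV_mult[OF DERIV_pow pow_deriv], of c] by (simp add: algebra_simps)
  have "real k * p ^ (k - 1) * (1 - p) = real k * p ^ (k - 1) - real k * p ^ k"
    by (cases k) (simp_all add: algebra_simps)
  then have "- (real k * c) * p ^ (k - 1) * (1 - p) ^ N
      + c * (real k * p ^ (k - 1) * (1 - p) ^ Suc N - real (Suc N) * p ^ k * (1 - p) ^ N)
      = - (real (Suc k) * real (N + Suc k choose Suc k)) * p ^ (Suc k - 1) * (1 - p) ^ N"
    unfolding binom_step by (simp add: algebra_simps, blast)
  moreover have "(\<lambda>p. (1 - p) ^ Suc N * negbin_partial_sum N (Suc k) p)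
      = (\<lambda>p. (1 - p) ^ Suc N * negbin_partial_sum N k p + c * p ^ k * (1 - p) ^ Suc N)"
    by (simp add: negbin_partial_sum_def c_def algebra_simps)
  ultimately show ?case
    using DERIV_add[OF Suc[unfolded c_def[symmetric]] step_term] by simp
qed

lemma deriv_hkn:
  assumes "k \<le> n"
  shows "deriv (hkn k n) p = real k * real (n choose k) * p ^ (k - 1) * (1 - p) ^ (n - k)"
proof -
  have "hkn k n = (\<lambda>p. 1 - (1 - p) ^ Suc (n - k) * negbin_partial_sum (n - k) k p)"
    using one_minus_hkn_eq[OF assms] by (auto simp: algebra_simps)
  then have "(hkn k n has_real_derivative real k * real (n choose k) * p ^ (k - 1) * (1 - p) ^ (n - k)) (at p)"
    using DERIV_diff[OF DERIV_const has_real_derivative_negbin_tail[of "n - k" k p]] assms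
    by simp
  then show ?thesis by (rule DERIV_imp_deriv)
qed

lemma Rkn_eq:
  assumes "0 < k" "k \<le> n" "0 \<le> p" "p < 1"
  shows "Rkn k n p = real k * real (n choose k) * p ^ (k - 1) / negbin_partial_sum (n - k) k p"
  using negbin_partial_sum_ge_1[OF assms(1,3), of "n - k"] assms
  by (simp add: Rkn_def deriv_hkn one_minus_hkn_eq power_Suc field_simps)

lemma mono_on_Rkn_ratio:
  assumes "1 \<le> l" "l \<le> k" "k \<le> n" "l \<le> m" "n - k \<le> m - l"
  shows "mono_on {0<..<1} (\<lambda>p. Rkn k n p / Rkn l m p)"
proof -
  define d where "d = k - l"
  define a where "a i = (if d \<le> i then real (m - l + (i - d) choose (i - d)) else 0)" for i
  define b where "b i = real (n - k + i choose i)" for i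
  define C where "C = real k * real (n choose k) / (real l * real (m choose l))"
  have k_eq: "k = d + l" and pow_eq: "p ^ (k - Suc 0) = p ^ d * p ^ (l - Suc 0)" for p :: real
    using assms by (simp_all add: d_def flip: power_add)
  define Q where "Q p = (\<Sum>i<k. a i * p ^ i) / (\<Sum>i<k. b i * p ^ i)" for p :: real
  have ratio_eq: "Rkn k n p / Rkn l m p = C * Q p" if "p \<in> {0<..<1}" for p
  proof -
    have "1 \<le> negbin_partial_sum (n - k) k p" "1 \<le> negbin_partial_sum (m - l) l p"
      using that assms by (auto intro!: negbin_partial_sum_ge_1)
    moreover have "(\<Sum>i<k. a i * p ^ i) = p ^ d * negbin_partial_sum (m - l) l p"
      unfolding k_eq a_def negbin_partial_sum_def by (rule sum_shifted_powers)
    moreover have "(\<Sum>i<k. b i * p ^ i) = negbin_partial_sum (n - k) k p"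
      unfolding b_def negbin_partial_sum_def ..
    ultimately show ?thesis
      using that assms by (simp add: Rkn_eq pow_eq Q_def C_def field_simps)
  qed
  have "mono (\<lambda>i. a i / b i)"
    unfolding a_def b_def using assms by (intro shifted_binomial_ratio_mono) simp
  then have Q_mono: "mono_on {0..} Q"
    unfolding Q_def by (rule mono_on_power_sums_ratio) (simp add: b_def)
  show ?thesis
  proof (rule monotone_onI)
    fix p q :: real
    assume p: "p \<in> {0<..<1}" and q: "q \<in> {0<..<1}" and "p \<le> q"
    then have "Q p \<le> Q q" by (auto intro: monotone_onD[OF Q_mono])
    then show "Rkn k n p / Rkn l m p \<le> Rkn k n q / Rkn l m q"
      unfolding ratio_eq[OF p] ratio_eq[OF q] by (rule mult_left_mono) (simp add: C_def)
  qed
qed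

lemma negbin_partial_sum_has_derivative:
  "(negbin_partial_sum N k has_real_derivative
     (\<Sum>j<k. real (N + j choose j) * (real j * p ^ (j - 1)))) (at p)"
  unfolding negbin_partial_sum_def[abs_def] by (intro DERIV_sum DERIV_cmult) (simp add: DERIV_pow)

lemma Rkn_elasticity:
  assumes "0 < k" "k \<le> n" "0 < p" "p < 1"
  shows "p * deriv (Rkn k n) p / Rkn k n p
       = real (k - 1) - (\<Sum>j<k. real j * real (n - k + j choose j) * p ^ j) / negbin_partial_sum (n - k) k p"
proof -
  define G where "G = negbin_partial_sum (n - k) k"
  define G' where "G' = (\<Sum>j<k. real (n - k + j choose j) * (real j * p ^ (j - 1)))"
  define c where "c = real k * real (n choose k)"
  have G_ge_1: "1 \<le> G y" if "0 \<le> y" for y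
    unfolding G_def using assms(1) that by (rule negbin_partial_sum_ge_1)
  have R_eq: "Rkn k n y = c * y ^ (k - 1) / G y" if "y \<in> {0<..<1}" for y
    using Rkn_eq[of k n y] assms that by (simp add: G_def c_def)
  have R_pos: "0 < Rkn k n p"
    using R_eq[of p] G_ge_1[of p] assms by (simp add: c_def)
  define E where "E = real (k - 1) / p - G' / G p"
  have "((\<lambda>y. c * y ^ (k - 1) / G y) has_real_derivative c * p ^ (k - 1) / G p * E) (at p)"
    using G_ge_1[of p] assms unfolding G_def G'_def E_def
    by (intro has_real_derivative_monomial_div negbin_partial_sum_has_derivative) auto
  then have "(Rkn k n has_real_derivative c * p ^ (k - 1) / G p * E) (at p)"
    by (rule has_field_derivative_transform_within_open[where S = "{0<..<1}"])
      (use assms in \<open>auto simp: R_eq\<close>)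
  then have "deriv (Rkn k n) p = Rkn k n p * E"
    using R_eq[of p] assms by (simp add: DERIV_imp_deriv)
  then have "p * deriv (Rkn k n) p / Rkn k n p = p * E"
    using R_pos by simp
  also have "\<dots> = real (k - 1) - p * G' / G p"
    using G_ge_1[of p] assms by (simp add: E_def field_simps)
  also have "p * G' = (\<Sum>j<k. real j * real (n - k + j choose j) * p ^ j)"
    unfolding G'_def sum_distrib_left
    by (intro sum.cong refl) (auto simp: power_eq_if)
  finally show ?thesis
    unfolding G_def .
qed

lemma antimono_on_Rkn_elasticity:
  assumes "0 < k" "k \<le> n"
  shows "antimono_on {0<..<1} (\<lambda>p. p * deriv (Rkn k n) p / Rkn k n p)"
proof -
  define b where "b j = real (n - k + j choose j)" for j
  define Q where "Q p = (\<Sum>j<k. real j * b j * p ^ j) / (\<Sum>j<k. b j * p ^ j)" for p :: real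
  have "mono (\<lambda>j. real j * b j / b j)"
    by (simp add: b_def mono_def)
  then have Q_mono: "mono_on {0..} Q"
    unfolding Q_def by (rule mono_on_power_sums_ratio) (simp add: b_def)
  have elasticity_eq: "p * deriv (Rkn k n) p / Rkn k n p = real (k - 1) - Q p"
    if "p \<in> {0<..<1}" for p
    using Rkn_elasticity[OF assms, of p] that by (simp add: Q_def b_def negbin_partial_sum_def)
  show ?thesis
  proof (rule monotone_onI)
    fix p q :: real
    assume p: "p \<in> {0<..<1}" and q: "q \<in> {0<..<1}" and "p \<le> q"
    then have "Q p \<le> Q q" by (auto intro: monotone_onD[OF Q_mono])
    then show "q * deriv (Rkn k n) q / Rkn k n q \<le> p * deriv (Rkn k n) p / Rkn k n p"
      unfolding elasticity_eq[OF p] elasticity_eq[OF q] by simp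
  qed
qed

theorem lemma2p4:
  shows "(\<forall>k n l m :: nat. 1 \<le> k \<and> k \<le> n \<and> 1 \<le> l \<and> l \<le> m \<and> l \<le> k \<and> n - k \<le> m - l
            \<longrightarrow> mono_on {0<..<1::real} (\<lambda>p. Rkn k n p / Rkn l m p))
       \<and> (\<forall>k n :: nat. 1 \<le> k \<and> k \<le> n
            \<longrightarrow> antimono_on {0<..<1::real} (\<lambda>p. p * deriv (Rkn k n) p / Rkn k n p))"
  by (auto intro!: mono_on_Rkn_ratio antimono_on_Rkn_elasticity)

end
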